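(* For any signature $\Sigma$, any $\Sigma$-forest-like alphabets $A_1,A_2$ and any reduced $\Sigma$-forest $f$, $$\theta_{A_1,A_2}\big(r_{A_1\mathbin{+\!\!+}A_2}(E_f)\big)=(r_{A_1}\otimes r_{A_2})(\Delta E_f).$$
   Context: $\mathbb K$ is a field of characteristic zero; $[P]$ is $1$ if $P$ holds, $0$ otherwise. A signature is a set $\Sigma$ with arity map $|\cdot|:\Sigma\to\mathbb N$, $\Sigma(n)$ the elements of arity $n$. A $\Sigma$-term is the leaf $\bot$ or $s(t_1,\dots,t_n)$ with $s\in\Sigma(n)$, $t_i$ terms; degree = number of internal nodes, arity $|t|$ = number of leaves. $T(\Sigma)$ is the free operad: $t[t_1,\dots,t_{|t|}]$ grafts $t_i$ on the $i$-th leaf of $t$. A $\Sigma$-forest is a finite word of terms; reduced if no term is $\bot$; $\mathrm{rd}$ deletes terms equal to $\bot$. Internal nodes of a forest $f$ are identified with $1,\dots,\deg f$ by preorder; $d_f(i)$ is the decoration of $i$; $i\to^f_j i'$ means $i'$ is the $j$-th child of $i$; roots are the roots of the terms. $\mathbf N(T(\Sigma))$: basis $E_f$ ($f$ reduced forest), product $E_{f_1}E_{f_2}=E_{f_1f_2}$, coproduct the algebra morphism with $\Delta E_t=\sum E_{\mathrm{rd}(t')}\otimes E_{\mathrm{rd}(t_1\cdots t_{|t'|})}$ over all $t',t_1,\dots$ with $t=t'[t_1,\dots,t_{|t'|}]$. A $\Sigma$-forest-like alphabet is a set $A$ with arbitrary: subset $R^A$, subsets $D^A_s$ ($s\in\Sigma$),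 binary relations $\to^A_j$ ($j\ge1$). $\mathbb K\langle A\rangle$: noncommutative polynomials over $A$ with possibly infinite support but bounded degree. A word $w\in A^*$ is $A$-compatible with $f$ if it has length $\deg f$, $w(i)\in R^A$ for each root $i$, $w(i)\in D^A_{d_f(i)}$ for each node $i$, and $i\to^f_j i'$ implies $w(i)\to^A_j w(i')$. $r_A(E_f)=\sum_{w\in A^*}[w\ A\text{-compatible with }f]\,w$, extended linearly. The disjoint sum $A_1\mathbin{+\!\!+}A_2$ is $A_1\sqcup A_2$ with $R=R^{A_1}\sqcup R^{A_2}$, $D_s=D^{A_1}_s\sqcup D^{A_2}_s$, and $a\to_j a'$ iff ($a,a'\in A_1$, $a\to^{A_1}_j a'$) or ($a,a'\in A_2$, $a\to^{A_2}_j a'$) or ($a\in A_1$, $a'\in A_2$, $a'\in R^{A_2}$). $\theta_{A_1,A_2}:\mathbb K\langle A_1\sqcup A_2\rangle\to\mathbb K\langle A_1\rangle\otimes\mathbb K\langle A_2\rangle$ is the linear map $w\mapsto w_{|A_1}\otimes w_{|A_2}$ ($w_{|B}$ the subword of letters in $B$). *)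

theory Defs
  imports Main
begin

text \<open>A signature is a set S of symbols (of type 's) with an arity map ar.
  Terms: the leaf Leaf (written bot in the paper) or Node s [t1,...,tn].\<close>

datatype 's trm = Leaf | Node 's "'s trm list"

fun wf_trm :: "'s set \<Rightarrow> ('s \<Rightarrow> nat) \<Rightarrow> 's trm \<Rightarrow> bool" where
  "wf_trm S ar Leaf = True"
| "wf_trm S ar (Node s ts) = (s \<in> S \<and> length ts = ar s \<and> list_all (wf_trm S ar) ts)"

fun deg :: "'s trm \<Rightarrow> nat" where
  "deg Leaf = 0"
| "deg (Node s ts) = Suc (sum_list (map deg ts))"

fun nleaves :: "'s trm \<Rightarrow> nat" where
  "nleaves Leaf = 1"
| "nleaves (Node s ts) = sum_list (map nleaves ts)"

fun graft :: "'s trm \<Rightarrow> 's trm list \<Rightarrow> 's trm"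
and graft_l :: "'s trm list \<Rightarrow> 's trm list \<Rightarrow> 's trm list" where
  "graft Leaf us = hd us"
| "graft (Node s ts) us = Node s (graft_l ts us)"
| "graft_l [] us = []"
| "graft_l (t # ts) us = graft t (take (nleaves t) us) # graft_l ts (drop (nleaves t) us)"

type_synonym 's forest = "'s trm list"

definition fdeg :: "'s forest \<Rightarrow> nat" where
  "fdeg f = sum_list (map deg f)"

definition reduced :: "'s set \<Rightarrow> ('s \<Rightarrow> nat) \<Rightarrow> 's forest \<Rightarrow> bool" where
  "reduced S ar f \<longleftrightarrow> (\<forall>t\<in>set f. wf_trm S ar t \<and> t \<noteq> Leaf)"

definition rd :: "'s forest \<Rightarrow> 's forest" where
  "rd f = filter (\<lambda>t. t \<noteq> Leaf) f"

section \<open>Preorder numbering of internal nodes (0-based)\<close>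

fun pre :: "'s trm \<Rightarrow> 's list" where
  "pre Leaf = []"
| "pre (Node s ts) = s # concat (map pre ts)"

definition fdec :: "'s forest \<Rightarrow> 's list" where
  "fdec f = concat (map pre f)"

text \<open>Child edges (i, j, i'): node i' is the j-th child (j \<ge> 1) of node i.
  edges_t n t: edges of term t whose root has number n;
  edges_l p n j ts: edges from parent p to the children ts (the first of which is its
  j-th child, numbered from n), together with the edges inside these children.\<close>
fun edges_t :: "nat \<Rightarrow> 's trm \<Rightarrow> (nat \<times> nat \<times> nat) set"
and edges_l :: "nat \<Rightarrow> nat \<Rightarrow> nat \<Rightarrow> 's trm list \<Rightarrow> (nat \<times> nat \<times> nat) set" where
  "edges_t n Leaf = {}"
| "edges_t n (Node s ts) = edges_l n (Suc n) 1 ts"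
| "edges_l p n j [] = {}"
| "edges_l p n j (t # ts) =
     (if t = Leaf then {} else {(p, j, n)}) \<union> edges_t n t \<union> edges_l p (n + deg t) (Suc j) ts"

fun fedges_aux :: "nat \<Rightarrow> 's forest \<Rightarrow> (nat \<times> nat \<times> nat) set" where
  "fedges_aux n [] = {}"
| "fedges_aux n (t # ts) = edges_t n t \<union> fedges_aux (n + deg t) ts"

definition fedges :: "'s forest \<Rightarrow> (nat \<times> nat \<times> nat) set" where
  "fedges f = fedges_aux 0 f"

fun froots_aux :: "nat \<Rightarrow> 's forest \<Rightarrow> nat set" where
  "froots_aux n [] = {}"
| "froots_aux n (t # ts) = (if t = Leaf then {} else {n}) \<union> froots_aux (n + deg t) ts"

definition froots :: "'s forest \<Rightarrow> nat set" where
  "froots f = froots_aux 0 f"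

record ('a, 's) fl_alphabet =
  fl_carrier :: "'a set"
  fl_R :: "'a set"
  fl_D :: "'s \<Rightarrow> 'a set"
  fl_arr :: "nat \<Rightarrow> 'a \<Rightarrow> 'a \<Rightarrow> bool"

definition forest_like :: "'s set \<Rightarrow> ('a, 's) fl_alphabet \<Rightarrow> bool" where
  "forest_like S A \<longleftrightarrow> fl_R A \<subseteq> fl_carrier A \<and> (\<forall>s\<in>S. fl_D A s \<subseteq> fl_carrier A) \<and>
     (\<forall>j a a'. fl_arr A j a a' \<longrightarrow> a \<in> fl_carrier A \<and> a' \<in> fl_carrier A)"

definition compatible :: "('a, 's) fl_alphabet \<Rightarrow> 's forest \<Rightarrow> 'a list \<Rightarrow> bool" where
  "compatible A f w \<longleftrightarrow> length w = fdeg f \<and> set w \<subseteq> fl_carrier A \<and>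
     (\<forall>i\<in>froots f. w ! i \<in> fl_R A) \<and>
     (\<forall>i<fdeg f. w ! i \<in> fl_D A (fdec f ! i)) \<and>
     (\<forall>(i, j, i')\<in>fedges f. fl_arr A j (w ! i) (w ! i'))"

text \<open>Elements of K<A> are represented by their coefficient functions on words.
  r_A(E_f) = sum of all A-compatible words.\<close>
definition rA :: "('a, 's) fl_alphabet \<Rightarrow> 's forest \<Rightarrow> 'a list \<Rightarrow> 'k::field_char_0" where
  "rA A f w = (if compatible A f w then 1 else 0)"

definition fl_sum :: "('a, 's) fl_alphabet \<Rightarrow> ('b, 's) fl_alphabet \<Rightarrow> ('a + 'b, 's) fl_alphabet" where
  "fl_sum A1 A2 =
    \<lparr> fl_carrier = Inl ` fl_carrier A1 \<union> Inr ` fl_carrier A2,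
      fl_R = Inl ` fl_R A1 \<union> Inr ` fl_R A2,
      fl_D = (\<lambda>s. Inl ` fl_D A1 s \<union> Inr ` fl_D A2 s),
      fl_arr = (\<lambda>j x y. case (x, y) of
          (Inl a, Inl a') \<Rightarrow> fl_arr A1 j a a'
        | (Inr b, Inr b') \<Rightarrow> fl_arr A2 j b b'
        | (Inl a, Inr b) \<Rightarrow> a \<in> fl_carrier A1 \<and> b \<in> fl_carrier A2 \<and> b \<in> fl_R A2
        | (Inr b, Inl a) \<Rightarrow> False) \<rparr>"

definition projl :: "('a + 'b) list \<Rightarrow> 'a list" where
  "projl w = List.map_filter (case_sum Some (\<lambda>_. None)) w"

definition projr :: "('a + 'b) list \<Rightarrow> 'b list" where
  "projr w = List.map_filter (case_sum (\<lambda>_. None) Some) w"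

text \<open>theta: w \<mapsto> w|A1 \<otimes> w|A2; elements of the (completed) tensor product are
  represented by their coefficient functions on pairs of words.\<close>
definition theta :: "(('a + 'b) list \<Rightarrow> 'k::field_char_0) \<Rightarrow> ('a list \<times> 'b list \<Rightarrow> 'k)" where
  "theta P = (\<lambda>(u, v). \<Sum>w\<in>{w. projl w = u \<and> projr w = v}. P w)"

text \<open>Elements of N \<otimes> N are represented by finitely supported coefficient functions on
  pairs of (reduced) forests: X = sum X(g,h) E_g \<otimes> E_h.\<close>

definition tmul :: "('s forest \<times> 's forest \<Rightarrow> 'k::field_char_0) \<Rightarrow> ('s forest \<times> 's forest \<Rightarrow> 'k)
    \<Rightarrow> ('s forest \<times> 's forest \<Rightarrow> 'k)" where
  "tmul X Y = (\<lambda>(g, h). \<Sum>i\<le>length g. \<Sum>j\<le>length h.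
       X (take i g, take j h) * Y (drop i g, drop j h))"

definition tone :: "'s forest \<times> 's forest \<Rightarrow> 'k::field_char_0" where
  "tone = (\<lambda>(g, h). if g = [] \<and> h = [] then 1 else 0)"

definition decomps :: "'s set \<Rightarrow> ('s \<Rightarrow> nat) \<Rightarrow> 's trm \<Rightarrow> ('s trm \<times> 's trm list) set" where
  "decomps S ar t = {(t', ts). wf_trm S ar t' \<and> list_all (wf_trm S ar) ts \<and>
       length ts = nleaves t' \<and> graft t' ts = t}"

definition Delta_t :: "'s set \<Rightarrow> ('s \<Rightarrow> nat) \<Rightarrow> 's trm \<Rightarrow> ('s forest \<times> 's forest \<Rightarrow> 'k::field_char_0)" where
  "Delta_t S ar t = (\<lambda>(g, h). of_nat (card {(t', ts) \<in> decomps S ar t. rd [t'] = g \<and> rd ts = h}))"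

text \<open>Delta is an algebra morphism: Delta E_(t1...tk) = Delta E_t1 \<cdots> Delta E_tk.\<close>
definition Delta :: "'s set \<Rightarrow> ('s \<Rightarrow> nat) \<Rightarrow> 's forest \<Rightarrow> ('s forest \<times> 's forest \<Rightarrow> 'k::field_char_0)" where
  "Delta S ar f = foldr (\<lambda>t acc. tmul (Delta_t S ar t) acc) f tone"

definition rtensor :: "('a, 's) fl_alphabet \<Rightarrow> ('b, 's) fl_alphabet
    \<Rightarrow> ('s forest \<times> 's forest \<Rightarrow> 'k::field_char_0) \<Rightarrow> ('a list \<times> 'b list \<Rightarrow> 'k)" where
  "rtensor A1 A2 X = (\<lambda>(u, v). \<Sum>p\<in>{p. X p \<noteq> 0}. X p * rA A1 (fst p) u * rA A2 (snd p) v)"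

end

theory Submission
  imports Defs
begin

text \<open>In a word compatible with a term over \<open>A1 ++ A2\<close>, no arrow leads from a letter of
  \<open>A2\<close> back to one of \<open>A1\<close>, and the arrows from \<open>A1\<close> to \<open>A2\<close> are exactly those into
  \<open>R\<close> of \<open>A2\<close>. Hence the letters of \<open>A1\<close> label an upper part \<open>t'\<close> of each term
  \<open>t = t'[t\<^sub>1, ..., t\<^sub>k]\<close>, compatibly for \<open>A1\<close>, and the letters of \<open>A2\<close> label the
  forest \<open>t\<^sub>1 ... t\<^sub>k\<close>, compatibly for \<open>A2\<close>. Conversely, a decomposition together with
  two such compatible words interleaves to exactly one compatible word. So both sides count
  the same finite set: the left side as words with prescribed projections, the right side as
  decompositions of the forest.\<close>

section \<open>Compatibility, recursively\<close>

lemma trm_list_induct [case_names Leaf Node Nil Cons]: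
  fixes t :: "'s trm" and ts :: "'s trm list"
  assumes "P Leaf" and "\<And>s ts. Q ts \<Longrightarrow> P (Node s ts)"
    and "Q []" and "\<And>t ts. P t \<Longrightarrow> Q ts \<Longrightarrow> Q (t # ts)"
  shows "P t" and "Q ts"
proof -
  have Q: "Q ts" if "\<And>t. t \<in> set ts \<Longrightarrow> P t" for ts
    using that by (induct ts) (simp_all add: assms(3,4))
  show P: "P t" for t
    by (induct t) (simp_all add: assms(1,2) Q)
  show "Q ts"
    by (rule Q[OF P])
qed

lemma length_pre [simp]: "length (pre t) = deg t"
  by (induct t) (simp_all add: length_concat comp_def cong: map_cong)

lemma fdeg_simps [simp]: "fdeg [] = 0" "fdeg (t # f) = deg t + fdeg f"
  by (simp_all add: fdeg_def)

lemma length_fdec: "length (fdec f) = fdeg f"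
  by (simp add: fdec_def fdeg_def length_concat comp_def)

text \<open>The root label of a subterm is constrained by the predicate \<open>P\<close>: membership in \<open>R\<close> for
  a root of the forest, the arrow from the parent label otherwise.\<close>

fun compat_trm :: "('a, 's) fl_alphabet \<Rightarrow> ('a \<Rightarrow> bool) \<Rightarrow> 's trm \<Rightarrow> 'a list \<Rightarrow> bool"
and compat_children :: "('a, 's) fl_alphabet \<Rightarrow> 'a \<Rightarrow> nat \<Rightarrow> 's trm list \<Rightarrow> 'a list \<Rightarrow> bool" where
  "compat_trm A P Leaf w \<longleftrightarrow> w = []"
| "compat_trm A P (Node s ts) w \<longleftrightarrow> (case w of
     [] \<Rightarrow> False
   | a # w' \<Rightarrow> a \<in> fl_carrier A \<and> a \<in> fl_D A s \<and> P a \<and> compat_children A a 1 ts w')"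
| "compat_children A a j [] w \<longleftrightarrow> w = []"
| "compat_children A a j (t # ts) w \<longleftrightarrow>
     compat_trm A (fl_arr A j a) t (take (deg t) w) \<and> compat_children A a (Suc j) ts (drop (deg t) w)"

fun compat_forest :: "('a, 's) fl_alphabet \<Rightarrow> 's forest \<Rightarrow> 'a list \<Rightarrow> bool" where
  "compat_forest A [] w \<longleftrightarrow> w = []"
| "compat_forest A (t # ts) w \<longleftrightarrow>
     compat_trm A (\<lambda>a. a \<in> fl_R A) t (take (deg t) w) \<and> compat_forest A ts (drop (deg t) w)"

lemma length_compat:
  fixes t :: "'s trm" and ts :: "'s trm list"
  shows "compat_trm A P t w \<Longrightarrow> length w = deg t"
    and "compat_children A a j ts w \<Longrightarrow> length w = sum_list (map deg ts)"
proof (induct t and ts arbitrary: P w and a j w rule: trm_list_induct)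
  case (Node s ts)
  then obtain a w' where "w = a # w'" and "compat_children A a 1 ts w'"
    by (cases w) auto
  then show ?case using Node.hyps by simp
next
  case (Cons t ts)
  from Cons.prems have "length (take (deg t) w) = deg t"
    and "length (drop (deg t) w) = sum_list (map deg ts)"
    by (auto dest: Cons.hyps)
  then show ?case by (simp add: min_def split: if_splits)
qed simp_all

lemma length_compat_forest: "compat_forest A f w \<Longrightarrow> length w = fdeg f"
proof (induct f arbitrary: w)
  case (Cons t f)
  from Cons.prems have "length (take (deg t) w) = deg t" and "length (drop (deg t) w) = fdeg f"
    by (auto dest: Cons.hyps length_compat(1))
  then show ?case by (simp add: min_def split: if_splits)
qed simp

lemma compat_forest_rd: "compat_forest A (rd f) w \<longleftrightarrow> compat_forest A f w"
  by (induct f arbitrary: w) (auto simp: rd_def)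

lemma compat_forest_append:
  "compat_forest A (xs @ ys) w \<longleftrightarrow>
     compat_forest A xs (take (fdeg xs) w) \<and> compat_forest A ys (drop (fdeg xs) w)"
proof (induct xs arbitrary: w)
  case (Cons t xs)
  have "drop (deg t) (take (deg t + fdeg xs) w) = take (fdeg xs) (drop (deg t) w)"
    by (simp add: drop_take)
  moreover have "drop (deg t + fdeg xs) w = drop (fdeg xs) (drop (deg t) w)"
    by (simp add: add.commute)
  ultimately show ?case
    using Cons by simp
qed simp

lemma compat_trm_cong:
  "(\<And>a. a \<in> fl_carrier A \<Longrightarrow> P a \<longleftrightarrow> Q a) \<Longrightarrow> compat_trm A P t w \<longleftrightarrow> compat_trm A Q t w"
  by (cases t; cases w) auto

definition respects_decorations :: "('a, 's) fl_alphabet \<Rightarrow> 's list \<Rightarrow> 'a list \<Rightarrow> bool" where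
  "respects_decorations A ss w \<longleftrightarrow> list_all2 (\<lambda>s a. a \<in> fl_carrier A \<and> a \<in> fl_D A s) ss w"

text \<open>Compatibility of the window of \<open>W\<close> starting at position \<open>n\<close>, with the global node
  numbering of \<open>edges_t\<close>, \<open>edges_l\<close> and \<open>froots_aux\<close>.\<close>

definition compat_trm_at :: "('a, 's) fl_alphabet \<Rightarrow> ('a \<Rightarrow> bool) \<Rightarrow> nat \<Rightarrow> 's trm \<Rightarrow> 'a list \<Rightarrow> bool" where
  "compat_trm_at A P n t W \<longleftrightarrow> (t \<noteq> Leaf \<longrightarrow> P (W ! n)) \<and>
     respects_decorations A (pre t) (take (deg t) (drop n W)) \<and>
     (\<forall>(i, j, i')\<in>edges_t n t. fl_arr A j (W ! i) (W ! i'))"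

definition compat_children_at ::
    "('a, 's) fl_alphabet \<Rightarrow> nat \<Rightarrow> nat \<Rightarrow> nat \<Rightarrow> 's trm list \<Rightarrow> 'a list \<Rightarrow> bool" where
  "compat_children_at A p j n ts W \<longleftrightarrow>
     respects_decorations A (concat (map pre ts)) (take (sum_list (map deg ts)) (drop n W)) \<and>
     (\<forall>(i, j', i')\<in>edges_l p n j ts. fl_arr A j' (W ! i) (W ! i'))"

definition compat_forest_at :: "('a, 's) fl_alphabet \<Rightarrow> nat \<Rightarrow> 's forest \<Rightarrow> 'a list \<Rightarrow> bool" where
  "compat_forest_at A n f W \<longleftrightarrow> (\<forall>i\<in>froots_aux n f. W ! i \<in> fl_R A) \<and>
     respects_decorations A (concat (map pre f)) (take (sum_list (map deg f)) (drop n W)) \<and>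
     (\<forall>(i, j, i')\<in>fedges_aux n f. fl_arr A j (W ! i) (W ! i'))"

lemma respects_decorations_append_window:
  assumes "n + deg t + m \<le> length W"
  shows "respects_decorations A (pre t @ ss) (take (deg t + m) (drop n W)) \<longleftrightarrow>
    respects_decorations A (pre t) (take (deg t) (drop n W)) \<and>
    respects_decorations A ss (take m (drop (n + deg t) W))"
proof -
  have "take (deg t + m) (drop n W) = take (deg t) (drop n W) @ take m (drop (n + deg t) W)"
    by (simp add: take_add) (simp add: add.commute)
  then show ?thesis
    using assms by (simp add: respects_decorations_def list_all2_append)
qed

lemma compat_at_iff:
  fixes t :: "'s trm" and ts :: "'s trm list"
  shows "n + deg t \<le> length W \<Longrightarrow>
      compat_trm_at A P n t W \<longleftrightarrow> compat_trm A P t (take (deg t) (drop n W))"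
    and "n + sum_list (map deg ts) \<le> length W \<Longrightarrow>
      compat_children_at A p j n ts W \<longleftrightarrow>
      compat_children A (W ! p) j ts (take (sum_list (map deg ts)) (drop n W))"
proof (induct t and ts arbitrary: P n and p j n rule: trm_list_induct)
  case Leaf
  then show ?case by (simp add: compat_trm_at_def respects_decorations_def)
next
  case (Node s ts)
  have window: "take (deg (Node s ts)) (drop n W) = W ! n # take (sum_list (map deg ts)) (drop (Suc n) W)"
    using Node.prems by (simp add: Cons_nth_drop_Suc[symmetric])
  have "compat_trm_at A P n (Node s ts) W \<longleftrightarrow>
      W ! n \<in> fl_carrier A \<and> W ! n \<in> fl_D A s \<and> P (W ! n) \<and> compat_children_at A n 1 (Suc n) ts W"
    unfolding compat_trm_at_def compat_children_at_def window
    by (auto simp: respects_decorations_def)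
  then show ?case
    unfolding window using Node.hyps[of "Suc n"] Node.prems by simp
next
  case Nil
  then show ?case by (simp add: compat_children_at_def respects_decorations_def)
next
  case (Cons t ts)
  have "compat_children_at A p j n (t # ts) W \<longleftrightarrow>
      compat_trm_at A (fl_arr A j (W ! p)) n t W \<and> compat_children_at A p (Suc j) (n + deg t) ts W"
    using Cons.prems
    by (cases "t = Leaf")
      (auto simp: compat_trm_at_def compat_children_at_def respects_decorations_append_window ball_Un,
        auto simp: respects_decorations_def)
  then show ?case
    using Cons.hyps(1)[of n] Cons.hyps(2)[of "n + deg t"] Cons.prems
    by (simp add: take_add drop_take min_def add.commute)
qed

lemma compat_forest_at_iff:
  "n + sum_list (map deg f) \<le> length W \<Longrightarrow>
     compat_forest_at A n f W \<longleftrightarrow> compat_forest A f (take (sum_list (map deg f)) (drop n W))"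
proof (induct f arbitrary: n)
  case Nil
  then show ?case by (simp add: compat_forest_at_def respects_decorations_def)
next
  case (Cons t f)
  have "compat_forest_at A n (t # f) W \<longleftrightarrow>
      compat_trm_at A (\<lambda>a. a \<in> fl_R A) n t W \<and> compat_forest_at A (n + deg t) f W"
    using Cons.prems
    by (cases "t = Leaf")
      (auto simp: compat_trm_at_def compat_forest_at_def respects_decorations_append_window ball_Un,
        auto simp: respects_decorations_def)
  then show ?case
    using compat_at_iff(1)[of n t W] Cons.hyps[of "n + deg t"] Cons.prems
    by (simp add: take_add drop_take min_def add.commute)
qed

theorem compatible_iff_compat_forest: "compatible A f w \<longleftrightarrow> compat_forest A f w"
proof -
  have "set w \<subseteq> fl_carrier A \<and> (\<forall>i<fdeg f. w ! i \<in> fl_D A (fdec f ! i)) \<longleftrightarrow>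
      respects_decorations A (fdec f) w" if "length w = fdeg f"
    using that by (auto simp: respects_decorations_def list_all2_conv_all_nth length_fdec
        set_conv_nth)
  then have "compatible A f w \<longleftrightarrow> length w = fdeg f \<and> compat_forest_at A 0 f w"
    by (auto simp: compatible_def compat_forest_at_def froots_def fedges_def fdec_def fdeg_def)
  also have "\<dots> \<longleftrightarrow> compat_forest A f w"
    using compat_forest_at_iff[of 0 f w A] length_compat_forest[of A f w] by (auto simp: fdeg_def)
  finally show ?thesis .
qed

section \<open>Interleavings and the sum alphabet\<close>

lemma projl_simps [simp]:
  "projl [] = []" "projl (Inl a # w) = a # projl w" "projl (Inr b # w) = projl w"
  by (simp_all add: projl_def map_filter_simps)

lemma projr_simps [simp]:
  "projr [] = []" "projr (Inl a # w) = projr w" "projr (Inr b # w) = b # projr w"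
  by (simp_all add: projr_def map_filter_simps)

lemma length_projl: "length (projl w) = length (filter id (map isl w))"
proof (induct w)
  case (Cons x w)
  then show ?case by (cases x) simp_all
qed simp

lemma length_projr: "length (projr w) = length (filter Not (map isl w))"
proof (induct w)
  case (Cons x w)
  then show ?case by (cases x) simp_all
qed simp

lemma set_subset_projs: "set w \<subseteq> Inl ` set (projl w) \<union> Inr ` set (projr w)"
proof (induct w)
  case (Cons x w)
  then show ?case by (cases x) auto
qed simp

lemma finite_proj_fibre: "finite {w. projl w = u \<and> projr w = v}"
proof (rule finite_subset)
  have "length w = length (projl w) + length (projr w)" for w :: "('a + 'b) list"
    unfolding length_projl length_projr by (induct w) auto
  then show "{w. projl w = u \<and> projr w = v} \<subseteq>
      {w. set w \<subseteq> Inl ` set u \<union> Inr ` set v \<and> length w = length u + length v}"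
    using set_subset_projs by blast
  show "finite {w. set w \<subseteq> Inl ` set u \<union> Inr ` set v \<and> length w = length u + length v}"
    by (rule finite_lists_length_eq) simp
qed

fun interleave :: "bool list \<Rightarrow> 'a list \<Rightarrow> 'b list \<Rightarrow> ('a + 'b) list" where
  "interleave [] u v = []"
| "interleave (b # m) u v =
     (if b then Inl (hd u) # interleave m (tl u) v else Inr (hd v) # interleave m u (tl v))"

lemma length_interleave [simp]: "length (interleave m u v) = length m"
  by (induct m arbitrary: u v) auto

lemma map_isl_interleave [simp]: "map isl (interleave m u v) = m"
  by (induct m arbitrary: u v) auto

lemma projl_interleave: "length u = length (filter id m) \<Longrightarrow> projl (interleave m u v) = u"
  by (induct m arbitrary: u v) (auto simp: length_Suc_conv)

lemma projr_interleave: "length v = length (filter Not m) \<Longrightarrow> projr (interleave m u v) = v"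
  by (induct m arbitrary: u v) (auto simp: length_Suc_conv)

lemma interleave_projs: "interleave (map isl w) (projl w) (projr w) = w"
proof (induct w)
  case (Cons x w)
  then show ?case by (cases x) auto
qed simp

lemma interleave_append:
  "length u1 = length (filter id m1) \<Longrightarrow> length v1 = length (filter Not m1) \<Longrightarrow>
    interleave (m1 @ m2) (u1 @ u2) (v1 @ v2) = interleave m1 u1 v1 @ interleave m2 u2 v2"
  by (induct m1 arbitrary: u1 v1) (auto simp: length_Suc_conv)

lemma interleave_replicate_False: "length v = n \<Longrightarrow> interleave (replicate n False) u v = map Inr v"
  by (induct n arbitrary: v) (auto simp: length_Suc_conv)

lemma fl_sum_simps [simp]:
  "Inl a \<in> fl_carrier (fl_sum A1 A2) \<longleftrightarrow> a \<in> fl_carrier A1"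
  "Inr b \<in> fl_carrier (fl_sum A1 A2) \<longleftrightarrow> b \<in> fl_carrier A2"
  "Inl a \<in> fl_R (fl_sum A1 A2) \<longleftrightarrow> a \<in> fl_R A1"
  "Inr b \<in> fl_R (fl_sum A1 A2) \<longleftrightarrow> b \<in> fl_R A2"
  "Inl a \<in> fl_D (fl_sum A1 A2) s \<longleftrightarrow> a \<in> fl_D A1 s"
  "Inr b \<in> fl_D (fl_sum A1 A2) s \<longleftrightarrow> b \<in> fl_D A2 s"
  "fl_arr (fl_sum A1 A2) j (Inl a) (Inl a') \<longleftrightarrow> fl_arr A1 j a a'"
  "fl_arr (fl_sum A1 A2) j (Inr b) (Inr b') \<longleftrightarrow> fl_arr A2 j b b'"
  "fl_arr (fl_sum A1 A2) j (Inl a) (Inr b) \<longleftrightarrow> a \<in> fl_carrier A1 \<and> b \<in> fl_carrier A2 \<and> b \<in> fl_R A2"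
  "\<not> fl_arr (fl_sum A1 A2) j (Inr b) (Inl a)"
  by (auto simp: fl_sum_def)

section \<open>Grafting masks\<close>

text \<open>\<open>graft_mask t us\<close> marks, in preorder, the internal nodes of \<open>graft t us\<close> that come from
  \<open>t\<close> by \<open>True\<close> and those that come from the grafted terms \<open>us\<close> by \<open>False\<close>.\<close>

fun graft_mask :: "'s trm \<Rightarrow> 's trm list \<Rightarrow> bool list"
and graft_mask_l :: "'s trm list \<Rightarrow> 's trm list \<Rightarrow> bool list" where
  "graft_mask Leaf us = replicate (deg (hd us)) False"
| "graft_mask (Node s ts) us = True # graft_mask_l ts us"
| "graft_mask_l [] us = []"
| "graft_mask_l (t # ts) us =
     graft_mask t (take (nleaves t) us) @ graft_mask_l ts (drop (nleaves t) us)"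

lemma length_graft_l [simp]: "length (graft_l ts us) = length ts"
  by (induct ts arbitrary: us) auto

lemma length_graft_mask:
  "length us = nleaves t \<Longrightarrow> length (graft_mask t us) = deg (graft t us) \<and>
     length (filter id (graft_mask t us)) = deg t \<and>
     length (filter Not (graft_mask t us)) = fdeg us"
  "length us = sum_list (map nleaves ts) \<Longrightarrow>
     length (graft_mask_l ts us) = fdeg (graft_l ts us) \<and>
     length (filter id (graft_mask_l ts us)) = fdeg ts \<and>
     length (filter Not (graft_mask_l ts us)) = fdeg us"
proof (induct t us and ts us rule: graft_graft_l.induct)
  case (1 us)
  then show ?case by (cases us) (auto simp: fdeg_def)
next
  case (4 t ts us)
  have "fdeg us = fdeg (take (nleaves t) us) + fdeg (drop (nleaves t) us)"
    by (metis append_take_drop_id fdeg_def map_append sum_list_append)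
  with 4 show ?case by (auto simp: min_def)
qed (simp_all add: fdeg_def)

fun ungraft :: "'s trm \<Rightarrow> bool list \<Rightarrow> 's trm \<times> 's trm list"
and ungraft_l :: "'s trm list \<Rightarrow> bool list \<Rightarrow> 's trm list \<times> 's trm list" where
  "ungraft Leaf m = (Leaf, [Leaf])"
| "ungraft (Node s ts) m =
     (if m \<noteq> [] \<and> hd m then (Node s (fst (ungraft_l ts (tl m))), snd (ungraft_l ts (tl m)))
      else (Leaf, [Node s ts]))"
| "ungraft_l [] m = ([], [])"
| "ungraft_l (t # ts) m =
     (fst (ungraft t (take (deg t) m)) # fst (ungraft_l ts (drop (deg t) m)),
      snd (ungraft t (take (deg t) m)) @ snd (ungraft_l ts (drop (deg t) m)))"

lemma ungraft_graft_mask: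
  "length us = nleaves t \<Longrightarrow> ungraft (graft t us) (graft_mask t us) = (t, us)"
  "length us = sum_list (map nleaves ts) \<Longrightarrow> ungraft_l (graft_l ts us) (graft_mask_l ts us) = (ts, us)"
proof (induct t us and ts us rule: graft_graft_l.induct)
  case (1 us)
  then obtain x where "us = [x]" by (cases us) auto
  then show ?case by (cases x) auto
next
  case (4 t ts us)
  then show ?case using length_graft_mask(1)[of "take (nleaves t) us" t] by simp
qed auto

lemma wf_trm_graftD:
  "wf_trm S ar (graft t us) \<Longrightarrow> length us = nleaves t \<Longrightarrow>
     wf_trm S ar t \<and> list_all (wf_trm S ar) us"
  "list_all (wf_trm S ar) (graft_l ts us) \<Longrightarrow> length us = sum_list (map nleaves ts) \<Longrightarrow>
     list_all (wf_trm S ar) ts \<and> list_all (wf_trm S ar) us"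
proof (induct t us and ts us rule: graft_graft_l.induct)
  case (1 us)
  then show ?case by (cases us) auto
next
  case (4 t ts us)
  then have "wf_trm S ar t \<and> list_all (wf_trm S ar) (take (nleaves t) us)"
    and "list_all (wf_trm S ar) ts \<and> list_all (wf_trm S ar) (drop (nleaves t) us)"
    by simp_all
  then show ?case
    by (metis append_take_drop_id list_all_append list.pred_inject(2))
qed auto

definition is_decomp :: "'s trm \<Rightarrow> 's trm \<times> 's trm list \<Rightarrow> bool" where
  "is_decomp t d \<longleftrightarrow> length (snd d) = nleaves (fst d) \<and> graft (fst d) (snd d) = t"

definition forest_mask :: "('s trm \<times> 's trm list) list \<Rightarrow> bool list" where
  "forest_mask ds = concat (map (\<lambda>d. graft_mask (fst d) (snd d)) ds)"

lemma forest_mask_simps [simp]: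
  "forest_mask [] = []" "forest_mask (d # ds) = graft_mask (fst d) (snd d) @ forest_mask ds"
  by (simp_all add: forest_mask_def)

lemma length_graft_mask_is_decomp: "is_decomp t d \<Longrightarrow> length (graft_mask (fst d) (snd d)) = deg t"
  using length_graft_mask(1) by (auto simp: is_decomp_def)

lemma is_decomp_mask_inj:
  "is_decomp t d1 \<Longrightarrow> is_decomp t d2 \<Longrightarrow>
     graft_mask (fst d1) (snd d1) = graft_mask (fst d2) (snd d2) \<Longrightarrow> d1 = d2"
  by (metis is_decomp_def prod.collapse ungraft_graft_mask(1))

lemma finite_is_decomp: "finite {d. is_decomp t d}"
proof (rule inj_on_finite)
  show "inj_on (\<lambda>d. graft_mask (fst d) (snd d)) {d. is_decomp t d}"
    by (rule inj_onI) (simp add: is_decomp_mask_inj)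
  show "(\<lambda>d. graft_mask (fst d) (snd d)) ` {d. is_decomp t d} \<subseteq> {m. set m \<subseteq> UNIV \<and> length m = deg t}"
    using length_graft_mask_is_decomp by fastforce
  show "finite {m :: bool list. set m \<subseteq> UNIV \<and> length m = deg t}"
    by (rule finite_lists_length_eq) simp
qed

lemma length_filter_forest_mask:
  assumes "list_all2 is_decomp f ds"
  shows "length (filter id (forest_mask ds)) = fdeg (map fst ds)"
    and "length (filter Not (forest_mask ds)) = fdeg (concat (map snd ds))"
  using assms
  by (induct f ds rule: list_all2_induct) (auto simp: is_decomp_def fdeg_def length_graft_mask(1))

lemma forest_mask_inj:
  "list_all2 is_decomp f ds1 \<Longrightarrow> list_all2 is_decomp f ds2 \<Longrightarrow> forest_mask ds1 = forest_mask ds2 \<Longrightarrow>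
     ds1 = ds2"
proof (induct f ds1 arbitrary: ds2 rule: list_all2_induct)
  case (Cons t f d1 ds1)
  then obtain d2 ds2' where ds2: "ds2 = d2 # ds2'" "is_decomp t d2" "list_all2 is_decomp f ds2'"
    by (cases ds2) auto
  have "length (graft_mask (fst d1) (snd d1)) = length (graft_mask (fst d2) (snd d2))"
    using Cons.hyps(1) ds2(2) by (simp add: length_graft_mask_is_decomp)
  with Cons.prems ds2(1) have "graft_mask (fst d1) (snd d1) = graft_mask (fst d2) (snd d2)"
    and "forest_mask ds1 = forest_mask ds2'"
    by simp_all
  with Cons.hyps ds2 show ?case
    using is_decomp_mask_inj by blast
qed simp

section \<open>Compatibility over the sum alphabet\<close>

lemma compat_fl_sum_map_Inr:
  fixes t :: "'s trm" and ts :: "'s trm list"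
  shows "compat_trm (fl_sum A1 A2) P t (map Inr v) \<longleftrightarrow> compat_trm A2 (\<lambda>b. P (Inr b)) t v"
    and "compat_children (fl_sum A1 A2) (Inr b) j ts (map Inr v) \<longleftrightarrow> compat_children A2 b j ts v"
proof (induct t and ts arbitrary: P v and b j v rule: trm_list_induct)
  case (Node s ts)
  then show ?case by (cases v) auto
next
  case (Cons t ts)
  then show ?case
    using Cons.hyps(1)[of "fl_arr (fl_sum A1 A2) j (Inr b)"] by (simp add: take_map drop_map)
qed simp_all

lemma compat_graft_interleave:
  "length us = nleaves t \<Longrightarrow> length u = deg t \<Longrightarrow> length v = fdeg us \<Longrightarrow>
   (\<And>b. b \<in> fl_carrier A2 \<Longrightarrow> P (Inr b) \<longleftrightarrow> b \<in> fl_R A2) \<Longrightarrow>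
   compat_trm (fl_sum A1 A2) P (graft t us) (interleave (graft_mask t us) u v) \<longleftrightarrow>
   compat_trm A1 (\<lambda>a. P (Inl a)) t u \<and> compat_forest A2 us v"
  "length us = sum_list (map nleaves ts) \<Longrightarrow> length u = fdeg ts \<Longrightarrow> length v = fdeg us \<Longrightarrow>
   a \<in> fl_carrier A1 \<Longrightarrow>
   compat_children (fl_sum A1 A2) (Inl a) j (graft_l ts us) (interleave (graft_mask_l ts us) u v) \<longleftrightarrow>
   compat_children A1 a j ts u \<and> compat_forest A2 us v"
proof (induct t us and ts us arbitrary: P u v and a j u v rule: graft_graft_l.induct)
  case (1 us)
  then obtain x where "us = [x]" and "u = []" and "length v = deg x"
    by (cases us) auto
  moreover have "compat_trm A2 (\<lambda>b. P (Inr b)) x v \<longleftrightarrow> compat_trm A2 (\<lambda>b. b \<in> fl_R A2) x v"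
    using "1.prems"(4) by (rule compat_trm_cong)
  ultimately show ?case
    by (simp add: interleave_replicate_False compat_fl_sum_map_Inr)
next
  case (2 s ts us)
  then obtain a u' where "u = a # u'" by (cases u) auto
  with 2 show ?case by (auto simp: fdeg_def)
next
  case (4 t ts us)
  define us1 us2 where "us1 = take (nleaves t) us" and "us2 = drop (nleaves t) us"
  define u1 u2 where "u1 = take (deg t) u" and "u2 = drop (deg t) u"
  define v1 v2 where "v1 = take (fdeg us1) v" and "v2 = drop (fdeg us1) v"
  have us: "us = us1 @ us2" and u: "u = u1 @ u2" and v: "v = v1 @ v2"
    by (simp_all add: us1_def us2_def u1_def u2_def v1_def v2_def)
  have "fdeg us = fdeg us1 + fdeg us2"
    unfolding us by (simp add: fdeg_def)
  then have len: "length us1 = nleaves t" "length u1 = deg t" "length v1 = fdeg us1"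
    "length u2 = fdeg ts" "length v2 = fdeg us2"
    using "4.prems"(1-3) by (simp_all add: us1_def us2_def u1_def u2_def v1_def v2_def)
  have mask: "length (graft_mask t us1) = deg (graft t us1)"
    "length (filter id (graft_mask t us1)) = deg t"
    "length (filter Not (graft_mask t us1)) = fdeg us1"
    using length_graft_mask(1)[OF len(1)] by simp_all
  have "compat_trm (fl_sum A1 A2) (fl_arr (fl_sum A1 A2) j (Inl a)) (graft t us1)
      (interleave (graft_mask t us1) u1 v1) \<longleftrightarrow> compat_trm A1 (fl_arr A1 j a) t u1 \<and> compat_forest A2 us1 v1"
    using "4.hyps"(1)[of u1 v1 "fl_arr (fl_sum A1 A2) j (Inl a)"] "4.prems"(4) len
    by (simp add: us1_def)
  moreover have "compat_children (fl_sum A1 A2) (Inl a) (Suc j) (graft_l ts us2)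
      (interleave (graft_mask_l ts us2) u2 v2) \<longleftrightarrow> compat_children A1 a (Suc j) ts u2 \<and> compat_forest A2 us2 v2"
    using "4.hyps"(2)[of u2 v2 a "Suc j"] "4.prems" len by (simp add: us1_def us2_def)
  moreover have "interleave (graft_mask_l (t # ts) us) u v =
      interleave (graft_mask t us1) u1 v1 @ interleave (graft_mask_l ts us2) u2 v2"
    unfolding u v using mask len by (simp add: us1_def us2_def interleave_append)
  ultimately show ?case
    unfolding us u v using mask len by (simp add: compat_forest_append conj_ac)
qed simp_all

text \<open>No arrow leads from a letter of \<open>A2\<close> back to \<open>A1\<close>, so below a letter of \<open>A2\<close> all
  letters are in \<open>A2\<close>; the letters of \<open>A1\<close> thus form the trunk of a decomposition.\<close>

lemma compat_fl_sum_all_Inr: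
  fixes t :: "'s trm" and ts :: "'s trm list"
  shows "compat_trm (fl_sum A1 A2) P t w \<Longrightarrow> (\<And>a. \<not> P (Inl a)) \<Longrightarrow> \<forall>y\<in>set w. \<not> isl y"
    and "compat_children (fl_sum A1 A2) x j ts w \<Longrightarrow> \<not> isl x \<Longrightarrow> \<forall>y\<in>set w. \<not> isl y"
proof (induct t and ts arbitrary: P w and x j w rule: trm_list_induct)
  case (Node s ts)
  then obtain y w' where "w = y # w'" and "\<not> isl y" and "compat_children (fl_sum A1 A2) y 1 ts w'"
    by (cases w; cases "hd w") auto
  with Node.hyps show ?case by auto
next
  case (Cons t ts)
  have "\<forall>y\<in>set (take (deg t) w). \<not> isl y"
    using Cons.hyps(1)[of "fl_arr (fl_sum A1 A2) j x" "take (deg t) w"] Cons.prems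
    by (cases x) auto
  moreover have "\<forall>y\<in>set (drop (deg t) w). \<not> isl y"
    using Cons.hyps(2)[of x "Suc j" "drop (deg t) w"] Cons.prems by simp
  ultimately show ?case
    by (metis Un_iff append_take_drop_id set_append)
qed simp_all

lemma ex_graft_mask:
  fixes t :: "'s trm" and ts :: "'s trm list"
  shows "compat_trm (fl_sum A1 A2) P t w \<Longrightarrow>
      \<exists>t' us. length us = nleaves t' \<and> graft t' us = t \<and> graft_mask t' us = map isl w"
    and "compat_children (fl_sum A1 A2) x j ts w \<Longrightarrow> isl x \<Longrightarrow>
      \<exists>ts' us. length us = sum_list (map nleaves ts') \<and> graft_l ts' us = ts \<and>
        graft_mask_l ts' us = map isl w"
proof (induct t and ts arbitrary: P w and x j w rule: trm_list_induct)
  case Leaf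
  then show ?case by (intro exI[of _ Leaf] exI[of _ "[Leaf]"]) simp
next
  case (Node s ts)
  then obtain y w' where w: "w = y # w'" and y: "compat_children (fl_sum A1 A2) y 1 ts w'"
    by (cases w) auto
  show ?case
  proof (cases "isl y")
    case True
    with Node.hyps[OF y] obtain ts' us where
      "length us = sum_list (map nleaves ts')" "graft_l ts' us = ts" "graft_mask_l ts' us = map isl w'"
      by blast
    with True w show ?thesis by (intro exI[of _ "Node s ts'"] exI[of _ us]) simp
  next
    case False
    then have "map isl w = replicate (length w) False"
      using w compat_fl_sum_all_Inr(2)[OF y False]
      by (auto simp: map_replicate_const[symmetric] cong: map_cong)
    moreover have "length w = deg (Node s ts)"
      using Node.prems by (rule length_compat)
    ultimately show ?thesis by (intro exI[of _ Leaf] exI[of _ "[Node s ts]"]) simp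
  qed
next
  case Nil
  then show ?case by (intro exI[of _ "[]"]) simp
next
  case (Cons t ts)
  obtain t' us1 where
    "length us1 = nleaves t'" "graft t' us1 = t" "graft_mask t' us1 = map isl (take (deg t) w)"
    using Cons.hyps(1) Cons.prems(1) by fastforce
  moreover obtain ts' us2 where "length us2 = sum_list (map nleaves ts')" "graft_l ts' us2 = ts"
      "graft_mask_l ts' us2 = map isl (drop (deg t) w)"
    using Cons.hyps(2) Cons.prems by fastforce
  ultimately show ?case
    by (intro exI[of _ "t' # ts'"] exI[of _ "us1 @ us2"]) (simp flip: map_append)
qed

lemma ex_forest_mask:
  "compat_forest (fl_sum A1 A2) f w \<Longrightarrow> \<exists>ds. list_all2 is_decomp f ds \<and> forest_mask ds = map isl w"
proof (induct f arbitrary: w)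
  case (Cons t f)
  obtain t' us where "is_decomp t (t', us)" and "graft_mask t' us = map isl (take (deg t) w)"
    using ex_graft_mask(1) Cons.prems by (fastforce simp: is_decomp_def)
  moreover obtain ds where "list_all2 is_decomp f ds" "forest_mask ds = map isl (drop (deg t) w)"
    using Cons by auto
  ultimately show ?case
    by (intro exI[of _ "(t', us) # ds"]) (simp flip: map_append)
qed simp

lemma compat_forest_interleave:
  assumes "list_all2 is_decomp f ds"
    and "length u = fdeg (map fst ds)" and "length v = fdeg (concat (map snd ds))"
  shows "compat_forest (fl_sum A1 A2) f (interleave (forest_mask ds) u v) \<longleftrightarrow>
    compat_forest A1 (map fst ds) u \<and> compat_forest A2 (concat (map snd ds)) v"
  using assms
proof (induct f ds arbitrary: u v rule: list_all2_induct)
  case (Cons t f d ds)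
  obtain t' us where d: "d = (t', us)" and "length us = nleaves t'" and t: "t = graft t' us"
    using Cons.hyps(1) by (cases d) (auto simp: is_decomp_def)
  define u1 u2 where "u1 = take (deg t') u" and "u2 = drop (deg t') u"
  define v1 v2 where "v1 = take (fdeg us) v" and "v2 = drop (fdeg us) v"
  have u: "u = u1 @ u2" and v: "v = v1 @ v2"
    by (simp_all add: u1_def u2_def v1_def v2_def)
  have len: "length u1 = deg t'" "length v1 = fdeg us"
    "length u2 = fdeg (map fst ds)" "length v2 = fdeg (concat (map snd ds))"
    using Cons.prems by (simp_all add: d u1_def u2_def v1_def v2_def fdeg_def)
  have mask: "length (graft_mask t' us) = deg t"
    "length (filter id (graft_mask t' us)) = deg t'"
    "length (filter Not (graft_mask t' us)) = fdeg us"
    using length_graft_mask(1)[OF \<open>length us = nleaves t'\<close>] t by simp_all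
  have "compat_trm (fl_sum A1 A2) (\<lambda>x. x \<in> fl_R (fl_sum A1 A2)) t (interleave (graft_mask t' us) u1 v1)
      \<longleftrightarrow> compat_trm A1 (\<lambda>a. a \<in> fl_R A1) t' u1 \<and> compat_forest A2 us v1"
    using compat_graft_interleave(1)[OF \<open>length us = nleaves t'\<close> len(1,2)] t by simp
  then show ?case
    unfolding u v using Cons.hyps(3)[OF len(3,4)] mask len
    by (simp add: d interleave_append compat_forest_append conj_ac)
qed simp

lemma compat_forest_fl_sum_decomp:
  assumes w: "compat_forest (fl_sum A1 A2) f w"
  obtains ds where "list_all2 is_decomp f ds"
    and "compat_forest A1 (map fst ds) (projl w)" and "compat_forest A2 (concat (map snd ds)) (projr w)"
    and "w = interleave (forest_mask ds) (projl w) (projr w)"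
proof -
  obtain ds where ds: "list_all2 is_decomp f ds" and mask: "forest_mask ds = map isl w"
    using ex_forest_mask[OF w] by blast
  have il: "w = interleave (forest_mask ds) (projl w) (projr w)"
    by (simp add: mask interleave_projs)
  have "length (projl w) = fdeg (map fst ds)" "length (projr w) = fdeg (concat (map snd ds))"
    using length_filter_forest_mask[OF ds] by (simp_all add: length_projl length_projr flip: mask)
  with w il have "compat_forest A1 (map fst ds) (projl w) \<and> compat_forest A2 (concat (map snd ds)) (projr w)"
    using compat_forest_interleave[OF ds] by (metis (no_types))
  with ds il show ?thesis
    using that by blast
qed

section \<open>Counting\<close>

lemma decomps_subset_is_decomp: "decomps S ar t \<subseteq> {d. is_decomp t d}"
  by (auto simp: decomps_def is_decomp_def)

lemma finite_decomps: "finite (decomps S ar t)"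
  using finite_subset[OF decomps_subset_is_decomp finite_is_decomp] .

lemma decomps_eq_is_decomp: "wf_trm S ar t \<Longrightarrow> decomps S ar t = {d. is_decomp t d}"
  using wf_trm_graftD(1) by (fastforce simp: decomps_def is_decomp_def)

definition forest_decomps :: "'s set \<Rightarrow> ('s \<Rightarrow> nat) \<Rightarrow> 's forest \<Rightarrow> ('s trm \<times> 's trm list) list set" where
  "forest_decomps S ar f = {ds. list_all2 (\<lambda>t d. d \<in> decomps S ar t) f ds}"

lemma forest_decomps_Nil: "forest_decomps S ar [] = {[]}"
  by (auto simp: forest_decomps_def)

lemma forest_decomps_Cons:
  "forest_decomps S ar (t # f) = (\<lambda>(d, ds). d # ds) ` (decomps S ar t \<times> forest_decomps S ar f)"
  by (auto simp: forest_decomps_def list_all2_Cons1)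

lemma finite_forest_decomps: "finite (forest_decomps S ar f)"
  by (induct f) (auto simp: forest_decomps_Nil forest_decomps_Cons finite_decomps)

lemma forest_decomps_eq_is_decomp:
  "\<forall>t\<in>set f. wf_trm S ar t \<Longrightarrow> forest_decomps S ar f = {ds. list_all2 is_decomp f ds}"
  by (auto simp: forest_decomps_def list_all2_conv_all_nth decomps_eq_is_decomp)

definition trunks :: "('s trm \<times> 's trm list) list \<Rightarrow> 's forest" where
  "trunks ds = rd (map fst ds)"

definition branches :: "('s trm \<times> 's trm list) list \<Rightarrow> 's forest" where
  "branches ds = rd (concat (map snd ds))"

lemma trunks_simps [simp]: "trunks [] = []" "trunks (d # ds) = rd [fst d] @ trunks ds"
  by (simp_all add: trunks_def rd_def)

lemma branches_simps [simp]: "branches [] = []" "branches (d # ds) = rd (snd d) @ branches ds"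
  by (simp_all add: branches_def rd_def)

lemma tmul_count:
  fixes p :: "'a \<Rightarrow> 's forest \<times> 's forest" and q :: "'b \<Rightarrow> 's forest \<times> 's forest"
  assumes "finite A" and "finite B"
  shows "tmul (\<lambda>x. of_nat (card {a \<in> A. p a = x})) (\<lambda>x. of_nat (card {b \<in> B. q b = x})) (g, h) =
    (of_nat (card {(a, b) \<in> A \<times> B. fst (p a) @ fst (q b) = g \<and> snd (p a) @ snd (q b) = h})
      :: 'k::field_char_0)"
proof -
  define I where "I = {..length g} \<times> {..length h}"
  define C where "C ij = {a \<in> A. p a = (take (fst ij) g, take (snd ij) h)} \<times>
    {b \<in> B. q b = (drop (fst ij) g, drop (snd ij) h)}" for ij
  have "tmul (\<lambda>x. of_nat (card {a \<in> A. p a = x})) (\<lambda>x. of_nat (card {b \<in> B. q b = x})) (g, h) =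
      (of_nat (\<Sum>ij\<in>I. card (C ij)) :: 'k)"
    by (simp add: tmul_def C_def I_def card_cartesian_product sum.cartesian_product case_prod_beta)
  also have "(\<Sum>ij\<in>I. card (C ij)) = card (\<Union>ij\<in>I. C ij)"
  proof (rule card_UN_disjoint[symmetric])
    show "finite I" "\<forall>ij\<in>I. finite (C ij)"
      using assms by (simp_all add: I_def C_def)
    show "\<forall>ij\<in>I. \<forall>ij'\<in>I. ij \<noteq> ij' \<longrightarrow> C ij \<inter> C ij' = {}"
      by (fastforce simp: I_def C_def prod_eq_iff min_def dest: arg_cong[where f = length])
  qed
  also have "(\<Union>ij\<in>I. C ij) = {(a, b) \<in> A \<times> B. fst (p a) @ fst (q b) = g \<and> snd (p a) @ snd (q b) = h}"
  proof -
    have "xs @ ys = zs \<longleftrightarrow> (\<exists>i\<le>length zs. xs = take i zs \<and> ys = drop i zs)" for xs ys zs :: "'s forest"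
      by (auto intro!: exI[of _ "length xs"])
    then show ?thesis
      by (auto simp: I_def C_def prod_eq_iff)
  qed
  finally show ?thesis .
qed

lemma Delta_eq_card:
  "(Delta S ar f x :: 'k::field_char_0) =
     of_nat (card {ds \<in> forest_decomps S ar f. (trunks ds, branches ds) = x})"
proof (induct f arbitrary: x)
  case Nil
  have "{ds \<in> forest_decomps S ar []. (trunks ds, branches ds) = x} = (if x = ([], []) then {[]} else {})"
    by (auto simp: forest_decomps_Nil)
  then show ?case
    by (cases x) (simp add: Delta_def tone_def)
next
  case (Cons t f)
  obtain g h where x: "x = (g, h)" by (cases x)
  have "(Delta_t S ar t :: _ \<Rightarrow> 'k) = (\<lambda>x. of_nat (card {d \<in> decomps S ar t. (rd [fst d], rd (snd d)) = x}))"
    by (simp add: Delta_t_def split_def prod_eq_iff)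
  moreover have "(Delta S ar f :: _ \<Rightarrow> 'k) = (\<lambda>x. of_nat (card {ds \<in> forest_decomps S ar f. (trunks ds, branches ds) = x}))"
    by (rule ext) (rule Cons)
  ultimately have "(Delta S ar (t # f) x :: 'k) = of_nat (card {(d, ds) \<in> decomps S ar t \<times> forest_decomps S ar f.
      rd [fst d] @ trunks ds = g \<and> rd (snd d) @ branches ds = h})"
    by (simp add: Delta_def x tmul_count finite_decomps finite_forest_decomps)
  also have "{(d, ds) \<in> decomps S ar t \<times> forest_decomps S ar f.
      rd [fst d] @ trunks ds = g \<and> rd (snd d) @ branches ds = h} =
    {(d, ds). d # ds \<in> {ds \<in> forest_decomps S ar (t # f). (trunks ds, branches ds) = x}}"
    by (auto simp: x forest_decomps_Cons)
  also have "card \<dots> = card {ds \<in> forest_decomps S ar (t # f). (trunks ds, branches ds) = x}"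
    by (rule bij_betw_same_card[of "\<lambda>(d, ds). d # ds"])
      (auto simp: bij_betw_def inj_on_def image_def forest_decomps_Cons)
  finally show ?case .
qed

lemma rtensor_count:
  fixes X :: "'s forest \<times> 's forest \<Rightarrow> 'k::field_char_0"
  assumes "finite D" and X: "\<And>x. X x = of_nat (card {d \<in> D. K d = x})"
  shows "rtensor A1 A2 X (u, v) =
    of_nat (card {d \<in> D. compatible A1 (fst (K d)) u \<and> compatible A2 (snd (K d)) v})"
proof -
  define c where "c x = (rA A1 (fst x) u * rA A2 (snd x) v :: 'k)" for x
  have "{x. X x \<noteq> 0} = K ` D"
    using assms by (force simp: X)
  then have "rtensor A1 A2 X (u, v) = (\<Sum>x\<in>K ` D. of_nat (card {d \<in> D. K d = x}) * c x)"
    by (simp add: rtensor_def X c_def mult.assoc)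
  also have "\<dots> = (\<Sum>d\<in>D. c (K d))"
    using sum_fun_comp[where S = D and R = "K ` D" and g = K and f = c] assms(1) by simp
  also have "\<dots> = (\<Sum>d\<in>D. of_bool (compatible A1 (fst (K d)) u \<and> compatible A2 (snd (K d)) v))"
    by (intro sum.cong) (auto simp: c_def rA_def)
  also have "\<dots> = of_nat (card (D \<inter> {d. compatible A1 (fst (K d)) u \<and> compatible A2 (snd (K d)) v}))"
    by (intro sum_of_bool_eq assms(1))
  finally show ?thesis
    by (simp add: Int_def)
qed

lemma theta_count:
  "(theta (rA A f) (u, v) :: 'k::field_char_0) =
     of_nat (card {w. projl w = u \<and> projr w = v \<and> compatible A f w})"
proof -
  have "(theta (rA A f) (u, v) :: 'k) = (\<Sum>w\<in>{w. projl w = u \<and> projr w = v}. of_bool (compatible A f w))"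
    by (simp add: theta_def rA_def of_bool_def)
  also have "\<dots> = of_nat (card ({w. projl w = u \<and> projr w = v} \<inter> {w. compatible A f w}))"
    by (intro sum_of_bool_eq finite_proj_fibre)
  finally show ?thesis
    by (simp add: Int_def conj_assoc)
qed

lemma bij_betw_interleave_forest_mask:
  "bij_betw (\<lambda>ds. interleave (forest_mask ds) u v)
     {ds. list_all2 is_decomp f ds \<and>
        compat_forest A1 (map fst ds) u \<and> compat_forest A2 (concat (map snd ds)) v}
     {w. projl w = u \<and> projr w = v \<and> compat_forest (fl_sum A1 A2) f w}"
  (is "bij_betw ?il ?D ?W")
proof (rule bij_betw_imageI)
  show "inj_on ?il ?D"
  proof (rule inj_onI)
    fix ds1 ds2 assume "ds1 \<in> ?D" "ds2 \<in> ?D" "?il ds1 = ?il ds2"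
    then show "ds1 = ds2"
      using forest_mask_inj by (metis (no_types, lifting) map_isl_interleave mem_Collect_eq)
  qed
  show "?il ` ?D = ?W"
  proof
    show "?il ` ?D \<subseteq> ?W"
    proof
      fix w assume "w \<in> ?il ` ?D"
      then obtain ds where ds: "list_all2 is_decomp f ds" and u: "compat_forest A1 (map fst ds) u"
        and v: "compat_forest A2 (concat (map snd ds)) v" and w: "w = ?il ds"
        by blast
      from u v have "length u = fdeg (map fst ds)" "length v = fdeg (concat (map snd ds))"
        by (simp_all add: length_compat_forest)
      with ds u v show "w \<in> ?W"
        by (simp add: w projl_interleave projr_interleave compat_forest_interleave
            length_filter_forest_mask)
    qed
    show "?W \<subseteq> ?il ` ?D"
      by (auto elim!: compat_forest_fl_sum_decomp)
  qed
qed

theorem proposition4p4: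
  fixes S :: "'s set" and ar :: "'s \<Rightarrow> nat"
    and A1 :: "('a, 's) fl_alphabet" and A2 :: "('b, 's) fl_alphabet"
    and f :: "'s forest"
  assumes "forest_like S A1" and "forest_like S A2" and "reduced S ar f"
  shows "theta (rA (fl_sum A1 A2) f) =
         (rtensor A1 A2 (Delta S ar f) :: 'a list \<times> 'b list \<Rightarrow> 'k::field_char_0)"
proof -
  have wf: "\<forall>t\<in>set f. wf_trm S ar t"
    using assms(3) by (simp add: reduced_def)
  have "(theta (rA (fl_sum A1 A2) f) (u, v) :: 'k) = rtensor A1 A2 (Delta S ar f) (u, v)" for u v
  proof -
    have "(theta (rA (fl_sum A1 A2) f) (u, v) :: 'k) =
        of_nat (card {w. projl w = u \<and> projr w = v \<and> compat_forest (fl_sum A1 A2) f w})"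
      by (simp add: theta_count compatible_iff_compat_forest)
    also have "\<dots> = of_nat (card {ds. list_all2 is_decomp f ds \<and>
        compat_forest A1 (map fst ds) u \<and> compat_forest A2 (concat (map snd ds)) v})"
      using bij_betw_same_card[OF bij_betw_interleave_forest_mask[of u v f A1 A2]] by simp
    also have "\<dots> = rtensor A1 A2 (Delta S ar f) (u, v)"
      by (simp add: rtensor_count[OF finite_forest_decomps Delta_eq_card] forest_decomps_eq_is_decomp[OF wf]
          trunks_def branches_def compatible_iff_compat_forest compat_forest_rd conj_assoc)
    finally show ?thesis .
  qed
  then show ?thesis
    by (intro ext) (metis surj_pair)
qed

end
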